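(* For $n\ge2$, $c_n=|\mathcal C_n(321)|\ge |S_{n-1}(132,231)|=2^{n-2}$.
   Context: A permutation $\pi=\pi_1\cdots\pi_n$ (one-line notation) contains a classical pattern $p\in S_k$ if some subsequence $\pi_{t_1}\cdots\pi_{t_k}$ ($t_1<\dots<t_k$) is order-isomorphic to $p$; otherwise it avoids $p$. $S_m(132,231)$ is the set of permutations of $[m]$ avoiding both $132$ and $231$. $\mathcal C_n$ is the set of cyclic permutations of $[n]$ (a single $n$-cycle), $\mathcal C_n(321)$ those avoiding $321$, and $c_n=|\mathcal C_n(321)|$. *)

theory Defs
  imports "HOL-Combinatorics.Multiset_Permutations" "HOL-Library.Sublist"
begin

text \<open>Permutations of [m] = {1..m} in one-line notation, as lists.\<close>
definition perms :: "nat \<Rightarrow> nat list set" where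
  "perms m = permutations_of_set {1..m}"

definition contains :: "nat list \<Rightarrow> nat list \<Rightarrow> bool" where
  "contains \<pi> p \<longleftrightarrow> (\<exists>ys. subseq ys \<pi> \<and> length ys = length p \<and>
      (\<forall>i<length p. \<forall>j<length p. (ys ! i < ys ! j \<longleftrightarrow> p ! i < p ! j)))"

definition avoids :: "nat list \<Rightarrow> nat list \<Rightarrow> bool" where
  "avoids \<pi> p \<longleftrightarrow> \<not> contains \<pi> p"

definition perm_fun :: "nat list \<Rightarrow> nat \<Rightarrow> nat" where
  "perm_fun \<pi> i = \<pi> ! (i - 1)"

text \<open>Cyclic permutations of [n]: a single n-cycle, i.e. the orbit of 1 is all of [n].\<close>
definition cyclic_perms :: "nat \<Rightarrow> nat list set" where
  "cyclic_perms n = {\<pi> \<in> perms n. \<forall>i\<in>{1..n}. \<exists>k. (perm_fun \<pi> ^^ k) 1 = i}"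

end

theory Submission
  imports Defs
begin

(*
  A permutation with distinct entries avoids both 132 and 231 iff no subsequence a b c has
  a < b > c. Then the largest entry must stand at one end, and deleting it leaves a permutation
  of the same kind; so the m-permutations avoiding 132 and 231 are built by putting m in front of
  or behind one of the (m-1)-permutations, and there are 2^(m-1) of them.

  For the lower bound, take a cyclic 321-avoiding permutation of [m] whose last entry is not m,
  and insert m+1 into its cycle either just before or just after m. Both insertions keep the
  permutation cyclic and 321-avoiding with last entry below m+1; the first one ends with m and
  the second with the old last entry, so their images are disjoint. Starting from 21, this
  doubling produces 2^(n-2) distinct elements of C_n(321).
*)

section \<open>Subsequences and patterns of length three\<close>

lemma subseq_set: "subseq xs ys \<Longrightarrow> set xs \<subseteq> set ys"
  by (metis set_nths_subset subseq_conv_nths)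

lemma subseq_distinct: "subseq xs ys \<Longrightarrow> distinct ys \<Longrightarrow> distinct xs"
  by (metis distinct_nthsI subseq_conv_nths)

lemma subseq_mapE:
  assumes "subseq ys (map f xs)"
  obtains zs where "subseq zs xs" "ys = map f zs"
  by (metis assms nths_map subseq_conv_nths)

lemma subseq_singleton_right: "subseq xs [x] \<longleftrightarrow> xs = [] \<or> xs = [x]"
  by (cases xs) auto

lemma subseq_snoc_iff:
  "subseq (ys @ [y]) (xs @ [x]) \<longleftrightarrow> subseq (ys @ [y]) xs \<or> (y = x \<and> subseq ys xs)"
proof -
  have "subseq (ys @ [y]) (xs @ [x]) \<longleftrightarrow>
      (\<exists>l1 l2. ys @ [y] = l1 @ l2 \<and> subseq l1 xs \<and> (l2 = [] \<or> l2 = [x]))"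
    by (simp add: subseq_append_iff subseq_singleton_right)
  also have "\<dots> \<longleftrightarrow> subseq (ys @ [y]) xs \<or> (y = x \<and> subseq ys xs)"
    by auto
  finally show ?thesis .
qed

lemma contains_subseq: "subseq \<pi> \<sigma> \<Longrightarrow> contains \<pi> p \<Longrightarrow> contains \<sigma> p"
  unfolding contains_def using subseq_order.order_trans by blast

lemma contains_map_strict_mono:
  assumes mono: "strict_mono_on (set \<pi>) h" and "contains (map h \<pi>) p"
  shows "contains \<pi> p"
proof -
  obtain ys where ys: "subseq ys (map h \<pi>)" "length ys = length p"
    and order: "\<forall>i<length p. \<forall>j<length p. ys ! i < ys ! j \<longleftrightarrow> p ! i < p ! j"
    using assms(2) unfolding contains_def by blast
  obtain zs where zs: "subseq zs \<pi>" "ys = map h zs"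
    using ys(1) by (rule subseq_mapE)
  have "ys ! i < ys ! j \<longleftrightarrow> zs ! i < zs ! j" if "i < length zs" "j < length zs" for i j
    using that zs strict_mono_on_less[OF mono] subseq_set[OF zs(1)] by (simp add: subsetD)
  then show ?thesis
    unfolding contains_def using zs ys order by (intro exI[of _ zs]) auto
qed

lemma contains_length3:
  "contains \<pi> [p, q, r] \<longleftrightarrow>
     (\<exists>a b c. subseq [a, b, c] \<pi> \<and>
        (a < b \<longleftrightarrow> p < q) \<and> (b < a \<longleftrightarrow> q < p) \<and> (a < c \<longleftrightarrow> p < r) \<and>
        (c < a \<longleftrightarrow> r < p) \<and> (b < c \<longleftrightarrow> q < r) \<and> (c < b \<longleftrightarrow> r < q))"
  (is "_ \<longleftrightarrow> (\<exists>a b c. subseq [a, b, c] \<pi> \<and> ?iso a b c)")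
proof
  assume "contains \<pi> [p, q, r]"
  then obtain ys where ys: "subseq ys \<pi>" "length ys = 3"
    and iso: "\<forall>i<3. \<forall>j<3. ys ! i < ys ! j \<longleftrightarrow> [p, q, r] ! i < [p, q, r] ! j"
    unfolding contains_def by auto
  obtain a b c where "ys = [a, b, c]"
    using ys(2) by (auto simp: numeral_3_eq_3 length_Suc_conv)
  with ys iso show "\<exists>a b c. subseq [a, b, c] \<pi> \<and> ?iso a b c"
    by (auto simp: numeral_3_eq_3 All_less_Suc2)
next
  assume "\<exists>a b c. subseq [a, b, c] \<pi> \<and> ?iso a b c"
  then obtain a b c where "subseq [a, b, c] \<pi>" "?iso a b c"
    by blast
  then show "contains \<pi> [p, q, r]"
    unfolding contains_def by (intro exI[of _ "[a, b, c]"]) (simp add: All_less_Suc2)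
qed

lemma contains_321: "contains \<pi> [3, 2, 1] \<longleftrightarrow> (\<exists>a b c. subseq [a, b, c] \<pi> \<and> c < b \<and> b < a)"
  unfolding contains_length3 by (auto; blast dest: less_trans)

lemma contains_132: "contains \<pi> [1, 3, 2] \<longleftrightarrow> (\<exists>a b c. subseq [a, b, c] \<pi> \<and> a < c \<and> c < b)"
  unfolding contains_length3 by (auto; blast dest: less_trans)

lemma contains_231: "contains \<pi> [2, 3, 1] \<longleftrightarrow> (\<exists>a b c. subseq [a, b, c] \<pi> \<and> c < a \<and> a < b)"
  unfolding contains_length3 by (auto; blast dest: less_trans)

lemma contains_321_snoc:
  "contains (xs @ [x]) [3, 2, 1] \<longleftrightarrow>
     contains xs [3, 2, 1] \<or> (\<exists>a b. subseq [a, b] xs \<and> x < b \<and> b < a)"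
  unfolding contains_321 using subseq_snoc_iff[of "[_, _]" _ xs x] by auto

section \<open>Permutations in one-line notation\<close>

lemma perms_iff: "\<pi> \<in> perms m \<longleftrightarrow> distinct \<pi> \<and> set \<pi> = {1..m}"
  by (auto simp: perms_def permutations_of_set_def)

lemma finite_perms: "finite (perms m)"
  by (simp add: perms_def)

lemma length_perms: "\<pi> \<in> perms m \<Longrightarrow> length \<pi> = m"
  by (metis perms_iff distinct_card card_atLeastAtMost diff_Suc_1)

lemma Cons_max_perms_iff: "Suc m # \<pi> \<in> perms (Suc m) \<longleftrightarrow> \<pi> \<in> perms m"
  by (auto simp: perms_iff atLeastAtMostSuc_conv insert_ident)

lemma snoc_max_perms_iff: "\<pi> @ [Suc m] \<in> perms (Suc m) \<longleftrightarrow> \<pi> \<in> perms m"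
  by (auto simp: perms_iff atLeastAtMostSuc_conv insert_ident)

lemma perms_snocE:
  assumes "\<pi> \<in> perms m" "1 \<le> m"
  obtains \<rho> l where "\<pi> = \<rho> @ [l]" "length \<rho> = m - 1"
proof -
  have "\<pi> \<noteq> []"
    using assms length_perms by fastforce
  then obtain \<rho> l where "\<pi> = \<rho> @ [l]"
    by (metis rev_exhaust)
  with length_perms[OF assms(1)] show thesis
    using that by simp
qed

lemma perm_fun_in_range:
  assumes "\<pi> \<in> perms m" "x \<in> {1..m}"
  shows "perm_fun \<pi> x \<in> {1..m}"
proof -
  have "x - 1 < length \<pi>"
    using assms length_perms by fastforce
  then have "\<pi> ! (x - 1) \<in> set \<pi>"
    by (rule nth_mem)
  with assms(1) show ?thesis
    unfolding perm_fun_def perms_iff by simp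
qed

lemma perm_fun_surj:
  assumes "\<pi> \<in> perms m" "i \<in> {1..m}"
  shows "\<exists>x\<in>{1..m}. perm_fun \<pi> x = i"
proof -
  from assms have "i \<in> set \<pi>"
    by (simp add: perms_iff)
  then obtain k where "k < length \<pi>" "\<pi> ! k = i"
    by (auto simp: in_set_conv_nth)
  with length_perms[OF assms(1)] show ?thesis
    unfolding perm_fun_def by (intro bexI[of _ "Suc k"]) auto
qed

lemma card_Un_disjoint_images_inj:
  assumes "finite A" "inj_on f A" "inj_on g A" "f ` A \<inter> g ` A = {}"
  shows "card (f ` A \<union> g ` A) = 2 * card A"
  using assms by (simp add: card_Un_disjoint card_image)

section \<open>Permutations avoiding 132 and 231\<close>

definition peak_free :: "nat list \<Rightarrow> bool" where
  "peak_free \<pi> \<longleftrightarrow> \<not> (\<exists>a b c. subseq [a, b, c] \<pi> \<and> a < b \<and> c < b)"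

lemma avoids_132_231_iff_peak_free:
  assumes "distinct \<pi>"
  shows "avoids \<pi> [1, 3, 2] \<and> avoids \<pi> [2, 3, 1] \<longleftrightarrow> peak_free \<pi>"
proof -
  have "a \<noteq> c" if "subseq [a, b, c] \<pi>" for a b c
    using subseq_distinct[OF that assms] by simp
  then show ?thesis
    unfolding avoids_def contains_132 contains_231 peak_free_def
    by (meson less_trans linorder_neqE_nat)
qed

lemma peak_free_Cons_max:
  assumes "\<forall>y\<in>set \<pi>. y < x"
  shows "peak_free (x # \<pi>) \<longleftrightarrow> peak_free \<pi>"
proof -
  have "subseq [a, b, c] (x # \<pi>) \<longleftrightarrow> subseq [a, b, c] \<pi>" if "a < b" for a b c
  proof
    assume abc: "subseq [a, b, c] (x # \<pi>)"
    show "subseq [a, b, c] \<pi>"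
    proof (cases "a = x")
      case True
      with abc have "subseq [b, c] \<pi>"
        by (metis subseq_Cons2_iff)
      then have "b \<in> set \<pi>"
        using subseq_set by fastforce
      with assms \<open>a < b\<close> True show ?thesis by auto
    next
      case False
      with abc show ?thesis by simp
    qed
  qed (rule list_emb.list_emb_Cons)
  then show ?thesis
    unfolding peak_free_def by blast
qed

lemma peak_free_snoc_max:
  assumes "\<forall>y\<in>set \<pi>. y < x"
  shows "peak_free (\<pi> @ [x]) \<longleftrightarrow> peak_free \<pi>"
proof -
  have "subseq [a, b, c] (\<pi> @ [x]) \<longleftrightarrow> subseq [a, b, c] \<pi>" if "c < b" for a b c
  proof -
    have "subseq [a, b] \<pi> \<Longrightarrow> c \<noteq> x"
      using assms \<open>c < b\<close> subseq_set by fastforce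
    then show ?thesis
      using subseq_snoc_iff[of "[a, b]" c \<pi> x] by auto
  qed
  then show ?thesis
    unfolding peak_free_def by blast
qed

lemma peak_free_max_at_end:
  assumes "peak_free (p @ x # q)" "\<forall>y\<in>set p \<union> set q. y < x"
  shows "p = [] \<or> q = []"
proof (rule ccontr)
  assume "\<not> (p = [] \<or> q = [])"
  then obtain a c where "a \<in> set p" "c \<in> set q"
    by (meson last_in_set list.set_sel(1))
  then have "subseq ([a] @ [x, c]) (p @ x # q)"
    by (intro list_emb_append_mono) (auto simp: subseq_singleton_left)
  moreover have "a < x" "c < x"
    using assms(2) \<open>a \<in> set p\<close> \<open>c \<in> set q\<close> by auto
  ultimately show False
    using assms(1) unfolding peak_free_def by auto
qed

lemma peak_free_perms_Suc:
  "{\<pi> \<in> perms (Suc m). peak_free \<pi>} =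
     Cons (Suc m) ` {\<pi> \<in> perms m. peak_free \<pi>} \<union>
     (\<lambda>\<pi>. \<pi> @ [Suc m]) ` {\<pi> \<in> perms m. peak_free \<pi>}"
  (is "?P (Suc m) = ?Cons ` ?P m \<union> ?snoc ` ?P m")
proof
  have below: "\<forall>y\<in>set \<pi>. y < Suc m" if "\<pi> \<in> perms m" for \<pi>
    using that by (auto simp: perms_iff)
  show "?Cons ` ?P m \<union> ?snoc ` ?P m \<subseteq> ?P (Suc m)"
    using below by (auto simp: Cons_max_perms_iff snoc_max_perms_iff
        peak_free_Cons_max peak_free_snoc_max)
next
  show "?P (Suc m) \<subseteq> ?Cons ` ?P m \<union> ?snoc ` ?P m"
  proof
    fix \<pi> assume "\<pi> \<in> ?P (Suc m)"
    then have \<pi>: "\<pi> \<in> perms (Suc m)" "peak_free \<pi>" by auto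
    then have "Suc m \<in> set \<pi>"
      by (simp add: perms_iff)
    then obtain p q where pq: "\<pi> = p @ Suc m # q"
      by (meson split_list)
    have "Suc m \<notin> set p \<union> set q" "set p \<union> set q \<subseteq> {1..Suc m}"
      using \<pi>(1) unfolding pq perms_iff by auto
    then have below_max: "\<forall>y\<in>set p \<union> set q. y < Suc m"
      by (metis atLeastAtMost_iff le_neq_implies_less subsetD)
    with \<pi> pq consider "\<pi> = Suc m # q" | "\<pi> = p @ [Suc m]"
      using peak_free_max_at_end by blast
    then show "\<pi> \<in> ?Cons ` ?P m \<union> ?snoc ` ?P m"
    proof cases
      case 1
      with \<pi> below_max have "q \<in> ?P m"
        by (simp add: Cons_max_perms_iff peak_free_Cons_max)
      with 1 show ?thesis by blast
    next
      case 2
      with \<pi> below_max have "p \<in> ?P m"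
        by (simp add: snoc_max_perms_iff peak_free_snoc_max)
      with 2 show ?thesis by blast
    qed
  qed
qed

lemma card_peak_free_perms: "card {\<pi> \<in> perms (Suc k). peak_free \<pi>} = 2 ^ k"
proof (induction k)
  case 0
  have "perms 1 = {[1]}"
    by (simp add: perms_def)
  moreover have "peak_free [1]"
    by (simp add: peak_free_def)
  ultimately have "{\<pi> \<in> perms 1. peak_free \<pi>} = {[1]}"
    by auto
  then show ?case
    by simp
next
  case (Suc k)
  let ?P = "{\<pi> \<in> perms (Suc k). peak_free \<pi>}"
  have "Suc (Suc k) # \<pi> \<noteq> \<sigma> @ [Suc (Suc k)]" if "\<pi> \<in> ?P" for \<pi> \<sigma>
  proof
    assume eq: "Suc (Suc k) # \<pi> = \<sigma> @ [Suc (Suc k)]"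
    from that have "\<pi> \<noteq> []" "set \<pi> = {1..Suc k}"
      by (auto simp: perms_iff)
    with eq have "last \<pi> = Suc (Suc k)"
      by (metis last_ConsR last_snoc)
    with \<open>\<pi> \<noteq> []\<close> have "Suc (Suc k) \<in> set \<pi>"
      by (metis last_in_set)
    with \<open>set \<pi> = {1..Suc k}\<close> show False
      by simp
  qed
  then have "Cons (Suc (Suc k)) ` ?P \<inter> (\<lambda>\<pi>. \<pi> @ [Suc (Suc k)]) ` ?P = {}"
    by blast
  then have "card {\<pi> \<in> perms (Suc (Suc k)). peak_free \<pi>} = 2 * card ?P"
    unfolding peak_free_perms_Suc[of "Suc k"]
    by (intro card_Un_disjoint_images_inj) (auto simp: finite_perms inj_on_def)
  with Suc.IH show ?case
    by simp
qed

section \<open>Cyclic permutations avoiding 321\<close>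

lemma funpow_simulation:
  assumes "a \<in> S" "f ` S \<subseteq> S"
    and step: "\<And>x. x \<in> S \<Longrightarrow> \<exists>j. (g ^^ j) x = f x"
  shows "\<exists>j. (g ^^ j) a = (f ^^ k) a"
proof (induction k)
  case 0
  show ?case
    by (metis funpow_0)
next
  case (Suc k)
  then obtain i where i: "(g ^^ i) a = (f ^^ k) a" ..
  have "(f ^^ k) a \<in> S"
    using assms(1,2) by (induction k) auto
  then obtain j where "(g ^^ j) ((f ^^ k) a) = f ((f ^^ k) a)"
    using step by blast
  with i have "(g ^^ (j + i)) a = (f ^^ Suc k) a"
    by (simp add: funpow_add)
  then show ?case ..
qed

lemma cyclic_perms_extend:
  assumes \<pi>: "\<pi> \<in> cyclic_perms m" and \<sigma>: "\<sigma> \<in> perms (Suc m)"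
    and sim: "\<And>x. x \<in> {1..m} \<Longrightarrow> \<exists>j. (perm_fun \<sigma> ^^ j) x = perm_fun \<pi> x"
    and y: "y \<in> {1..m}" "perm_fun \<sigma> y = Suc m"
  shows "\<sigma> \<in> cyclic_perms (Suc m)"
proof -
  have "\<pi> \<in> perms m" and cyc: "\<forall>i\<in>{1..m}. \<exists>k. (perm_fun \<pi> ^^ k) 1 = i"
    using \<pi> unfolding cyclic_perms_def by simp_all
  then have range: "perm_fun \<pi> ` {1..m} \<subseteq> {1..m}"
    using perm_fun_in_range by blast
  have one: "1 \<in> {1..m}"
    using y by simp
  have reach: "\<exists>j. (perm_fun \<sigma> ^^ j) 1 = i" if "i \<in> {1..m}" for i
  proof -
    from cyc that have "\<exists>k. (perm_fun \<pi> ^^ k) 1 = i"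
      by simp
    then obtain k where "(perm_fun \<pi> ^^ k) 1 = i" ..
    moreover have "\<exists>j. (perm_fun \<sigma> ^^ j) 1 = (perm_fun \<pi> ^^ k) 1"
      using funpow_simulation[where f = "perm_fun \<pi>" and g = "perm_fun \<sigma>"] one range sim
      by blast
    ultimately show ?thesis
      by simp
  qed
  obtain j where "(perm_fun \<sigma> ^^ j) 1 = y"
    using reach y(1) by blast
  with y(2) have top: "(perm_fun \<sigma> ^^ Suc j) 1 = Suc m"
    by simp
  have "\<exists>k. (perm_fun \<sigma> ^^ k) 1 = i" if "i \<in> {1..Suc m}" for i
  proof (cases "i = Suc m")
    case True
    with top show ?thesis by blast
  next
    case False
    with that reach show ?thesis by simp
  qed
  with \<sigma> show ?thesis
    unfolding cyclic_perms_def by simp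
qed

(* In cycle notation, m+1 is inserted just before m: x -> m becomes x -> m+1 -> m. *)
definition extend_before :: "nat \<Rightarrow> nat list \<Rightarrow> nat list" where
  "extend_before m \<pi> = map (\<lambda>x. if x = m then Suc m else x) \<pi> @ [m]"

lemma extend_before_perms:
  assumes "\<pi> \<in> perms m" "1 \<le> m"
  shows "extend_before m \<pi> \<in> perms (Suc m)"
proof -
  let ?h = "\<lambda>x. if x = m then Suc m else x"
  have set_\<pi>: "set \<pi> = {1..m}" and "distinct \<pi>"
    using assms(1) by (simp_all add: perms_iff)
  have "inj_on ?h (set \<pi>)"
    by (auto simp: inj_on_def set_\<pi>)
  with \<open>distinct \<pi>\<close> have dist: "distinct (extend_before m \<pi>)"
    by (auto simp: extend_before_def distinct_map)
  have img: "?h ` {1..m} = {1..Suc m} - {m}"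
  proof
    show "{1..Suc m} - {m} \<subseteq> ?h ` {1..m}"
    proof
      fix x assume x: "x \<in> {1..Suc m} - {m}"
      show "x \<in> ?h ` {1..m}"
      proof (cases "x = Suc m")
        case True
        with assms(2) show ?thesis by force
      next
        case False
        with x show ?thesis by force
      qed
    qed
  qed auto
  have "set (extend_before m \<pi>) = insert m (?h ` {1..m})"
    by (simp add: extend_before_def set_\<pi>)
  also have "\<dots> = {1..Suc m}"
    unfolding img by (rule insert_Diff) (use assms(2) in simp)
  finally show ?thesis
    using dist by (simp add: perms_iff)
qed

lemma perm_fun_extend_before:
  assumes "\<pi> \<in> perms m"
  shows "x \<in> {1..m} \<Longrightarrow>
      perm_fun (extend_before m \<pi>) x = (if perm_fun \<pi> x = m then Suc m else perm_fun \<pi> x)"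
    and "perm_fun (extend_before m \<pi>) (Suc m) = m"
  using length_perms[OF assms] by (auto simp: perm_fun_def extend_before_def nth_append)

lemma extend_before_cyclic:
  assumes \<pi>: "\<pi> \<in> cyclic_perms m" and "1 \<le> m"
  shows "extend_before m \<pi> \<in> cyclic_perms (Suc m)"
proof -
  have perm: "\<pi> \<in> perms m"
    using \<pi> by (simp add: cyclic_perms_def)
  let ?g = "perm_fun (extend_before m \<pi>)"
  have sim: "\<exists>j. (?g ^^ j) x = perm_fun \<pi> x" if "x \<in> {1..m}" for x
  proof (cases "perm_fun \<pi> x = m")
    case True
    with that have "(?g ^^ 2) x = perm_fun \<pi> x"
      by (simp add: perm_fun_extend_before[OF perm] numeral_2_eq_2)
    then show ?thesis ..
  next
    case False
    with that have "(?g ^^ 1) x = perm_fun \<pi> x"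
      by (simp add: perm_fun_extend_before[OF perm])
    then show ?thesis ..
  qed
  obtain y where y: "y \<in> {1..m}" "perm_fun \<pi> y = m"
    using perm_fun_surj[OF perm, of m] \<open>1 \<le> m\<close> by auto
  then have "?g y = Suc m"
    by (simp add: perm_fun_extend_before[OF perm])
  with cyclic_perms_extend[OF \<pi> extend_before_perms[OF perm \<open>1 \<le> m\<close>]] sim y(1)
  show ?thesis
    by blast
qed

lemma extend_before_avoids_321:
  assumes "\<pi> \<in> perms m" "avoids \<pi> [3, 2, 1]"
  shows "avoids (extend_before m \<pi>) [3, 2, 1]"
proof -
  let ?h = "\<lambda>x. if x = m then Suc m else x"
  have set_\<pi>: "set \<pi> = {1..m}"
    using assms(1) by (simp add: perms_iff)
  have "strict_mono_on (set \<pi>) ?h"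
    by (auto simp: strict_mono_on_def set_\<pi>)
  with assms(2) have "\<not> contains (map ?h \<pi>) [3, 2, 1]"
    using contains_map_strict_mono unfolding avoids_def by blast
  moreover have "\<not> (subseq [a, b] (map ?h \<pi>) \<and> m < b \<and> b < a)" for a b
  proof
    assume ab: "subseq [a, b] (map ?h \<pi>) \<and> m < b \<and> b < a"
    then have "a \<in> set (map ?h \<pi>)"
      using subseq_set by fastforce
    then have "a \<le> Suc m"
      by (auto simp: set_\<pi>)
    with ab show False
      by simp
  qed
  ultimately show ?thesis
    unfolding avoids_def extend_before_def contains_321_snoc by blast
qed

(* In cycle notation, m+1 is inserted just after m: m -> pi(m) becomes m -> m+1 -> pi(m). *)
definition extend_after :: "nat \<Rightarrow> nat list \<Rightarrow> nat list" where
  "extend_after m \<pi> = butlast \<pi> @ [Suc m, last \<pi>]"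

lemma extend_after_snoc: "extend_after m (\<rho> @ [l]) = \<rho> @ [Suc m, l]"
  by (simp add: extend_after_def)

lemma extend_after_perms:
  assumes "\<pi> \<in> perms m" "1 \<le> m"
  shows "extend_after m \<pi> \<in> perms (Suc m)"
proof -
  obtain \<rho> l where \<pi>: "\<pi> = \<rho> @ [l]"
    using assms by (rule perms_snocE)
  have "set (extend_after m \<pi>) = insert (Suc m) (set \<pi>)"
    "distinct (extend_after m \<pi>) \<longleftrightarrow> distinct \<pi> \<and> Suc m \<notin> set \<pi>"
    by (auto simp: \<pi> extend_after_snoc)
  with assms(1) show ?thesis
    by (simp add: perms_iff atLeastAtMostSuc_conv)
qed

lemma perm_fun_extend_after:
  assumes "\<pi> \<in> perms m" "1 \<le> m"
  shows "x \<in> {1..<m} \<Longrightarrow> perm_fun (extend_after m \<pi>) x = perm_fun \<pi> x"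
    and "perm_fun (extend_after m \<pi>) m = Suc m"
    and "perm_fun (extend_after m \<pi>) (Suc m) = perm_fun \<pi> m"
proof -
  obtain \<rho> l where \<pi>: "\<pi> = \<rho> @ [l]" and len: "length \<rho> = m - 1"
    using assms by (rule perms_snocE)
  have "\<not> m < length \<rho>" "m - length \<rho> = 1"
    using len assms(2) by auto
  show "x \<in> {1..<m} \<Longrightarrow> perm_fun (extend_after m \<pi>) x = perm_fun \<pi> x"
    using len by (auto simp: \<pi> extend_after_snoc perm_fun_def nth_append)
  show "perm_fun (extend_after m \<pi>) m = Suc m"
    using len assms(2) by (simp add: \<pi> extend_after_snoc perm_fun_def nth_append)
  show "perm_fun (extend_after m \<pi>) (Suc m) = perm_fun \<pi> m"
    using len assms(2) \<open>\<not> m < length \<rho>\<close> \<open>m - length \<rho> = 1\<close>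
    by (simp add: \<pi> extend_after_snoc perm_fun_def nth_append)
qed

lemma extend_after_cyclic:
  assumes \<pi>: "\<pi> \<in> cyclic_perms m" and "1 \<le> m"
  shows "extend_after m \<pi> \<in> cyclic_perms (Suc m)"
proof -
  have perm: "\<pi> \<in> perms m"
    using \<pi> by (simp add: cyclic_perms_def)
  let ?g = "perm_fun (extend_after m \<pi>)"
  have sim: "\<exists>j. (?g ^^ j) x = perm_fun \<pi> x" if "x \<in> {1..m}" for x
  proof (cases "x = m")
    case True
    then have "(?g ^^ 2) x = perm_fun \<pi> x"
      by (simp add: perm_fun_extend_after[OF perm \<open>1 \<le> m\<close>] numeral_2_eq_2)
    then show ?thesis ..
  next
    case False
    with that have "(?g ^^ 1) x = perm_fun \<pi> x"
      by (simp add: perm_fun_extend_after[OF perm \<open>1 \<le> m\<close>])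
    then show ?thesis ..
  qed
  have "?g m = Suc m" "m \<in> {1..m}"
    using \<open>1 \<le> m\<close> by (simp_all add: perm_fun_extend_after[OF perm \<open>1 \<le> m\<close>])
  with cyclic_perms_extend[OF \<pi> extend_after_perms[OF perm \<open>1 \<le> m\<close>]] sim
  show ?thesis
    by blast
qed

lemma extend_after_avoids_321:
  assumes "\<pi> \<in> perms m" "1 \<le> m" and avoids: "avoids \<pi> [3, 2, 1]"
  shows "avoids (extend_after m \<pi>) [3, 2, 1]"
proof -
  obtain \<rho> l where \<pi>: "\<pi> = \<rho> @ [l]"
    using assms(1,2) by (rule perms_snocE)
  have small: "\<forall>y\<in>set \<rho>. y < Suc m"
    using assms(1) by (auto simp: \<pi> perms_iff)
  have "\<not> contains \<rho> [3, 2, 1]"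
    using avoids contains_subseq[of \<rho> \<pi>] unfolding avoids_def \<pi> by auto
  moreover have "\<not> (subseq [a, b] \<rho> \<and> Suc m < b)" for a b
  proof
    assume ab: "subseq [a, b] \<rho> \<and> Suc m < b"
    then have "b \<in> set \<rho>"
      using subseq_set by fastforce
    with small have "b < Suc m"
      by blast
    with ab show False
      by simp
  qed
  ultimately have "\<not> contains (\<rho> @ [Suc m]) [3, 2, 1]"
    unfolding contains_321_snoc by blast
  moreover have "\<not> (subseq [a, b] (\<rho> @ [Suc m]) \<and> l < b \<and> b < a)" for a b
  proof
    assume ab: "subseq [a, b] (\<rho> @ [Suc m]) \<and> l < b \<and> b < a"
    then consider "subseq [a, b] \<rho>" | "b = Suc m" "subseq [a] \<rho>"
      using subseq_snoc_iff[of "[a]" b \<rho> "Suc m"] by auto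
    then show False
    proof cases
      case 1
      then have "subseq [a, b, l] \<pi>"
        unfolding \<pi> using subseq_append[of "[a, b]" "[l]" \<rho>] by simp
      with ab avoids show False
        unfolding avoids_def contains_321 by blast
    next
      case 2
      then have "a \<in> set \<rho>"
        by (simp add: subseq_singleton_left)
      with small have "a < Suc m"
        by blast
      with ab 2 show False
        by simp
    qed
  qed
  ultimately show ?thesis
    unfolding avoids_def \<pi> extend_after_snoc
    using contains_321_snoc[of "\<rho> @ [Suc m]" l] by auto
qed

(* The condition on the last entry keeps the images of extend_before and extend_after apart. *)
definition cyclic321_ending_below :: "nat \<Rightarrow> nat list set" where
  "cyclic321_ending_below m = {\<pi> \<in> cyclic_perms m. avoids \<pi> [3, 2, 1] \<and> last \<pi> \<noteq> m}"

lemma cyclic321_ending_below_perms: "cyclic321_ending_below m \<subseteq> perms m"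
  by (auto simp: cyclic321_ending_below_def cyclic_perms_def)

lemma finite_cyclic321_ending_below: "finite (cyclic321_ending_below m)"
  using cyclic321_ending_below_perms finite_perms by (rule finite_subset)

lemma extend_before_mem:
  assumes "\<pi> \<in> cyclic321_ending_below m" "1 \<le> m"
  shows "extend_before m \<pi> \<in> cyclic321_ending_below (Suc m)"
proof -
  have "\<pi> \<in> cyclic_perms m" "avoids \<pi> [3, 2, 1]" "\<pi> \<in> perms m"
    using assms(1) cyclic321_ending_below_perms by (auto simp: cyclic321_ending_below_def)
  moreover have "last (extend_before m \<pi>) = m"
    by (simp add: extend_before_def)
  ultimately show ?thesis
    unfolding cyclic321_ending_below_def
    using extend_before_cyclic[OF _ assms(2)] extend_before_avoids_321 by simp
qed

lemma extend_after_mem: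
  assumes "\<pi> \<in> cyclic321_ending_below m" "1 \<le> m"
  shows "extend_after m \<pi> \<in> cyclic321_ending_below (Suc m)"
proof -
  have "\<pi> \<in> cyclic_perms m" "avoids \<pi> [3, 2, 1]" and perm: "\<pi> \<in> perms m"
    using assms(1) cyclic321_ending_below_perms by (auto simp: cyclic321_ending_below_def)
  obtain \<rho> l where \<pi>: "\<pi> = \<rho> @ [l]"
    using perm assms(2) by (rule perms_snocE)
  have "last (extend_after m \<pi>) = l" "l \<in> set \<pi>"
    by (simp_all add: \<pi> extend_after_snoc)
  with perm have "last (extend_after m \<pi>) \<noteq> Suc m"
    by (auto simp: perms_iff)
  with \<open>\<pi> \<in> cyclic_perms m\<close> \<open>avoids \<pi> [3, 2, 1]\<close> show ?thesis
    unfolding cyclic321_ending_below_def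
    using extend_after_cyclic[OF _ assms(2)] extend_after_avoids_321[OF perm assms(2)] by simp
qed

lemma inj_on_extend_before: "inj_on (extend_before m) (perms m)"
proof (rule inj_onI)
  let ?h = "\<lambda>x. if x = m then Suc m else x"
  fix \<pi> \<sigma> assume "\<pi> \<in> perms m" "\<sigma> \<in> perms m" "extend_before m \<pi> = extend_before m \<sigma>"
  then have "map ?h \<pi> = map ?h \<sigma>" "set \<pi> \<union> set \<sigma> = {1..m}"
    by (simp_all add: extend_before_def perms_iff)
  moreover have "inj_on ?h {1..m}"
    by (auto simp: inj_on_def)
  ultimately show "\<pi> = \<sigma>"
    using inj_on_map_eq_map by metis
qed

lemma inj_on_extend_after:
  assumes "1 \<le> m"
  shows "inj_on (extend_after m) (perms m)"
proof (rule inj_onI)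
  fix \<pi> \<sigma> assume "\<pi> \<in> perms m" "\<sigma> \<in> perms m" and eq: "extend_after m \<pi> = extend_after m \<sigma>"
  obtain \<rho> l \<rho>' l' where "\<pi> = \<rho> @ [l]" "\<sigma> = \<rho>' @ [l']"
    using perms_snocE[OF \<open>\<pi> \<in> perms m\<close> assms] perms_snocE[OF \<open>\<sigma> \<in> perms m\<close> assms] by metis
  with eq show "\<pi> = \<sigma>"
    by (simp add: extend_after_snoc)
qed

lemma card_cyclic321_ending_below_Suc:
  assumes "1 \<le> m"
  shows "2 * card (cyclic321_ending_below m) \<le> card (cyclic321_ending_below (Suc m))"
proof -
  let ?C = "cyclic321_ending_below m"
  have "extend_before m \<pi> \<noteq> extend_after m \<sigma>" if \<sigma>: "\<sigma> \<in> ?C" for \<pi> \<sigma>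
  proof
    assume "extend_before m \<pi> = extend_after m \<sigma>"
    then have "last (extend_after m \<sigma>) = m"
      by (metis extend_before_def last_snoc)
    moreover have "\<sigma> \<in> perms m"
      using \<sigma> cyclic321_ending_below_perms by blast
    then obtain \<rho> l where "\<sigma> = \<rho> @ [l]"
      using assms by (rule perms_snocE)
    ultimately show False
      using \<sigma> by (simp add: extend_after_snoc cyclic321_ending_below_def)
  qed
  then have "card (extend_before m ` ?C \<union> extend_after m ` ?C) = 2 * card ?C"
    using inj_on_subset[OF inj_on_extend_before cyclic321_ending_below_perms]
      inj_on_subset[OF inj_on_extend_after[OF assms] cyclic321_ending_below_perms]
    by (intro card_Un_disjoint_images_inj finite_cyclic321_ending_below) blast+
  moreover have "extend_before m ` ?C \<union> extend_after m ` ?C \<subseteq> cyclic321_ending_below (Suc m)"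
    using extend_before_mem extend_after_mem assms by blast
  ultimately show ?thesis
    by (metis card_mono finite_cyclic321_ending_below)
qed

lemma two_one_in_cyclic321_ending_below: "[2, 1] \<in> cyclic321_ending_below 2"
proof -
  have "[2, 1] \<in> perms 2"
    by (auto simp: perms_iff)
  moreover have "\<forall>i\<in>{1..2}. \<exists>k. (perm_fun [2, 1] ^^ k) 1 = i"
  proof
    fix i :: nat assume "i \<in> {1..2}"
    then consider "i = 1" | "i = 2"
      by fastforce
    then show "\<exists>k. (perm_fun [2, 1] ^^ k) 1 = i"
    proof cases
      case 1
      then show ?thesis
        by (intro exI[of _ 0]) simp
    next
      case 2
      then show ?thesis
        by (intro exI[of _ 1]) (simp add: perm_fun_def)
    qed
  qed
  ultimately have "[2, 1] \<in> cyclic_perms 2"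
    unfolding cyclic_perms_def by (intro CollectI conjI)
  moreover have "avoids [2, 1] [3, 2, 1]"
    unfolding avoids_def contains_321 by simp
  ultimately show ?thesis
    by (simp add: cyclic321_ending_below_def)
qed

lemma card_cyclic321_ending_below: "2 ^ k \<le> card (cyclic321_ending_below (k + 2))"
proof (induction k)
  case 0
  have "cyclic321_ending_below 2 \<noteq> {}"
    using two_one_in_cyclic321_ending_below by blast
  then have "0 < card (cyclic321_ending_below 2)"
    using finite_cyclic321_ending_below by (simp add: card_gt_0_iff)
  then show ?case
    by (simp add: numeral_2_eq_2)
next
  case (Suc k)
  then show ?case
    using card_cyclic321_ending_below_Suc[of "k + 2"] by simp
qed

theorem mainTheorem6:
  fixes n :: nat
  assumes "n \<ge> 2"
  shows "card {\<pi> \<in> cyclic_perms n. avoids \<pi> [3,2,1]}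
           \<ge> card {\<pi> \<in> perms (n - 1). avoids \<pi> [1,3,2] \<and> avoids \<pi> [2,3,1]}
         \<and> card {\<pi> \<in> perms (n - 1). avoids \<pi> [1,3,2] \<and> avoids \<pi> [2,3,1]} = 2 ^ (n - 2)"
proof -
  have n: "n - 1 = Suc (n - 2)" "n = (n - 2) + 2"
    using assms by simp_all
  have "{\<pi> \<in> perms (n - 1). avoids \<pi> [1,3,2] \<and> avoids \<pi> [2,3,1]} =
      {\<pi> \<in> perms (Suc (n - 2)). peak_free \<pi>}"
    unfolding n(1) using avoids_132_231_iff_peak_free by (auto simp: perms_iff)
  then have S: "card {\<pi> \<in> perms (n - 1). avoids \<pi> [1,3,2] \<and> avoids \<pi> [2,3,1]} = 2 ^ (n - 2)"
    by (simp add: card_peak_free_perms)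
  have "cyclic321_ending_below n \<subseteq> {\<pi> \<in> cyclic_perms n. avoids \<pi> [3,2,1]}"
    by (auto simp: cyclic321_ending_below_def)
  moreover have "finite {\<pi> \<in> cyclic_perms n. avoids \<pi> [3,2,1]}"
    by (auto simp: cyclic_perms_def finite_perms)
  ultimately have "card (cyclic321_ending_below n) \<le> card {\<pi> \<in> cyclic_perms n. avoids \<pi> [3,2,1]}"
    by (rule card_mono[rotated])
  moreover have "2 ^ (n - 2) \<le> card (cyclic321_ending_below n)"
    using card_cyclic321_ending_below[of "n - 2"] n(2) by simp
  ultimately show ?thesis
    using S by simp
qed

end
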